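(* Let $m \le n$ and let $A \in \mathbb{R}^{m\times n}$ be a matrix with orthonormal rows. Let $b$ be a positive integer and let $A' \in \mathbb{R}^{m\times n}$ be obtained by rounding each entry of $A$ to $b$ bits, so that every entry of $A - A'$ has absolute value less than $2^{-b}$. Then for every $v \in \mathbb{R}^n$ there exists $s \in \mathbb{R}^n$ such that $A'v = A(v-s)$ and $\|s\|_2 \le n\,2^{-b}\,\|v\|_2$.
   Context: $\|\cdot\|_2$ denotes the Euclidean norm. *)

theory Defs
  imports "HOL-Analysis.Analysis"
begin

end

theory Submission
  imports Defs
begin

text \<open>Take \<open>s = A\<^sup>T (A - A') v\<close>. Since \<open>A A\<^sup>T = I\<close>, we get \<open>A s = (A - A') v\<close>, which is the
  required identity, and \<open>A\<^sup>T\<close> is an isometry, so \<open>\<parallel>s\<parallel> = \<parallel>(A - A') v\<parallel>\<close>. The latter is at most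
  the Frobenius norm of \<open>A - A'\<close> times \<open>\<parallel>v\<parallel>\<close>, i.e. at most \<open>\<surd>(m n) 2\<^sup>-\<^sup>b \<parallel>v\<parallel> \<le> n 2\<^sup>-\<^sup>b \<parallel>v\<parallel>\<close>.\<close>

lemma matrix_vector_mult_right_inverse:
  fixes A :: "real ^ 'n ^ 'm"
  assumes "A ** B = mat 1"
  shows "A *v (B *v w) = w"
  by (simp add: matrix_vector_mul_assoc assms)

lemma norm_transpose_matrix_vector_mult:
  fixes A :: "real ^ 'n ^ 'm"
  assumes "A ** transpose A = mat 1"
  shows "norm (transpose A *v w) = norm w"
proof -
  have "inner (transpose A *v w) (transpose A *v w) = inner w (A *v (transpose A *v w))"
    by (metis dot_lmul_matrix transpose_matrix_vector)
  also have "\<dots> = inner w w"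
    by (simp only: matrix_vector_mult_right_inverse[OF assms])
  finally show ?thesis
    by (simp add: norm_eq_sqrt_inner)
qed

lemma norm_matrix_vector_mult_le_entrywise:
  fixes M :: "real ^ 'n ^ 'm"
  assumes "\<And>i j. \<bar>M $ i $ j\<bar> \<le> e"
  shows "norm (M *v v) \<le> sqrt (real CARD('m) * real CARD('n)) * e * norm v"
proof -
  have e_nonneg: "0 \<le> e"
    using assms abs_ge_zero order_trans by blast
  have row: "\<bar>(M *v v) $ i\<bar> \<le> sqrt (real CARD('n)) * e * norm v" for i
  proof -
    have "\<bar>(M *v v) $ i\<bar> \<le> (\<Sum>j\<in>UNIV. \<bar>M $ i $ j\<bar> * \<bar>v $ j\<bar>)"
      unfolding matrix_vector_mult_def by (simp add: sum_abs[THEN order_trans] abs_mult)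
    also have "\<dots> \<le> L2_set (\<lambda>j. \<bar>M $ i $ j\<bar>) UNIV * norm v"
      using L2_set_mult_ineq[of "\<lambda>j. \<bar>M $ i $ j\<bar>" "\<lambda>j. \<bar>v $ j\<bar>" UNIV]
      by (simp add: norm_vec_def)
    also have "\<dots> \<le> L2_set (\<lambda>j. e) (UNIV :: 'n set) * norm v"
      using assms by (intro mult_right_mono L2_set_mono) auto
    also have "\<dots> = sqrt (real CARD('n)) * e * norm v"
      using e_nonneg by (simp add: L2_set_constant)
    finally show ?thesis .
  qed
  have "norm (M *v v) = L2_set (\<lambda>i. \<bar>(M *v v) $ i\<bar>) UNIV"
    by (simp add: norm_vec_def)
  also have "\<dots> \<le> L2_set (\<lambda>i. sqrt (real CARD('n)) * e * norm v) (UNIV :: 'm set)"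
    using row by (intro L2_set_mono) auto
  finally show ?thesis
    using e_nonneg by (simp add: L2_set_constant real_sqrt_mult)
qed

theorem mainTheorem1:
  fixes A A' :: "real ^ 'n ^ 'm" and b :: nat
  assumes "CARD('m) \<le> CARD('n)"
    and "A ** transpose A = mat 1"
    and "b \<ge> 1"
    and "\<And>i j. \<bar>A $ i $ j - A' $ i $ j\<bar> < 2 powr (- real b)"
  shows "\<forall>v :: real ^ 'n. \<exists>s :: real ^ 'n.
           A' *v v = A *v (v - s) \<and>
           norm s \<le> real CARD('n) * 2 powr (- real b) * norm v"
proof
  fix v :: "real ^ 'n"
  define e :: real where "e = 2 powr (- real b)"
  define s where "s = transpose A *v ((A - A') *v v)"
  have "A *v s = (A - A') *v v"
    unfolding s_def by (rule matrix_vector_mult_right_inverse[OF assms(2)])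
  then have "A' *v v = A *v (v - s)"
    by (simp add: matrix_vector_mult_diff_distrib matrix_vector_mult_diff_rdistrib)
  moreover have "norm s \<le> real CARD('n) * e * norm v"
  proof -
    have "norm s = norm ((A - A') *v v)"
      unfolding s_def by (rule norm_transpose_matrix_vector_mult[OF assms(2)])
    also have "\<dots> \<le> sqrt (real CARD('m) * real CARD('n)) * e * norm v"
      by (rule norm_matrix_vector_mult_le_entrywise) (use assms(4) in \<open>simp add: e_def less_imp_le\<close>)
    also have "\<dots> \<le> sqrt (real CARD('n) * real CARD('n)) * e * norm v"
      using assms(1) by (intro mult_right_mono real_sqrt_le_mono) (simp_all add: e_def)
    finally show ?thesis
      by simp
  qed
  ultimately show "\<exists>s. A' *v v = A *v (v - s) \<and> norm s \<le> real CARD('n) * 2 powr (- real b) * norm v"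
    unfolding e_def by blast
qed

end
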